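(* Let $T>0$ and let $X=\{X(t)\colon t\in[0,T]\}$ be a mean zero second order process satisfying (C1) and (C2) with constants $\gamma\in(0,1)$ and $\kappa>0$. Let $(\pi_n)_{n\in\mathbb N}$ be a sequence of partitions of $[0,T]$ with asymptotic ratios $(\ell_k)_{k\ge1}$ and range of asymptotic ratios $\mathcal L$. Let $$g(\lambda)=\frac{1+\lambda^{2\gamma-1}-(1+\lambda)^{2\gamma-1}}{\lambda^{\gamma-1/2}},\qquad\lambda>0.$$ (a) If $g$ is invariant on $\mathcal L$, then $\lim_{n\to\infty}\mathbb{E}V^{(2)}_{\pi_n}(X,2)=2\kappa^2 g(\ell)T$ for any $\ell\in\mathcal L$. (b) If the functions $\ell_n(t)=\sum_{k=1}^{N_n-1}\ell_k\mathbf 1_{[t^n_k,t^n_{k+1})}(t)$ converge uniformly on $[0,T]$ to a function $\ell(t)$, then $\lim_{n\to\infty}\mathbb{E}V^{(2)}_{\pi_n}(X,2)=2\kappa^2\int_0^T g(\ell(t))\,dt$.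
   Context: $\sigma_X^2(s,t)=\mathbb{E}[X(t)-X(s)]^2$. $\Psi$ is the class of continuous $\varphi\colon(0,T]\to[0,\infty)$ with $\varphi(h)\to0$, $L(h):=\varphi(h)/h\to\infty$, $hL(h)^3\to0$ as $h\downarrow0$. (C1): $\sigma_X(0,\delta)=O(\delta^\gamma)$ as $\delta\downarrow0$. (C2): for every $\varphi\in\Psi$, $\sup_{\varphi(\delta)\le t\le T-\delta}\sup_{0<h\le\delta}|\sigma_X(t,t+h)/(\kappa h^\gamma)-1|\to0$ as $\delta\downarrow0$. Partitions: $\pi_n=\{0=t^n_0<t^n_1<\dots<t^n_{N_n}=T\}$ with $(N_n)$ a strictly increasing sequence of natural numbers; $\Delta^n_kt=t^n_k-t^n_{k-1}$, $m_n=\max_k\Delta^n_kt$, $p_n=\min_k\Delta^n_kt$. $(\pi_n)$ has asymptotic ratios $(\ell_k)_{k\ge1}\subset(0,\infty)$ if (1) there is $c\ge1$ with $m_n\le cp_n$ for all $n$, and (2) $\lim_{n\to\infty}\sup_{1\le k\le N_n}|\Delta^n_{k-1}t/\Delta^n_kt-\ell_k|=0$; $\mathcal L=\{\ell_1,\ell_2,\dots\}$ is the range of asymptotic ratios. A function $g$ is invariant on $\mathcal L$ if $g(\ell)=g(\hat\ell)$ for all $\ell,\hat\ell\in\mathcal L$. Second order quadratic variation (with index $\gamma$): $$V^{(2)}_{\pi_n}(X,2)=2\sum_{k=1}^{N_n-1}\frac{\Delta^n_{k+1}t\,(\Delta^{(2)n}_{ir,k}X)^2}{(\Delta^n_kt)^{\gamma+1/2}(\Delta^n_{k+1}t)^{\gamma+1/2}[\Delta^n_kt+\Delta^n_{k+1}t]},$$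 $$\Delta^{(2)n}_{ir,k}X=\Delta^n_kt\,X(t^n_{k+1})+\Delta^n_{k+1}t\,X(t^n_{k-1})-(\Delta^n_kt+\Delta^n_{k+1}t)X(t^n_k).$$ *)

theory Defs
  imports "HOL-Probability.Probability" "HOL-Library.Landau_Symbols"
begin

text \<open>Partitions: tp n k is the k-th point t^n_k of the n-th partition, k = 0..N n.\<close>

definition Dt :: "(nat \<Rightarrow> nat \<Rightarrow> real) \<Rightarrow> nat \<Rightarrow> nat \<Rightarrow> real" where
  "Dt tp n k = tp n k - tp n (k - 1)"

definition mesh_max :: "(nat \<Rightarrow> nat) \<Rightarrow> (nat \<Rightarrow> nat \<Rightarrow> real) \<Rightarrow> nat \<Rightarrow> real" where
  "mesh_max N tp n = Max (Dt tp n ` {1..N n})"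

definition mesh_min :: "(nat \<Rightarrow> nat) \<Rightarrow> (nat \<Rightarrow> nat \<Rightarrow> real) \<Rightarrow> nat \<Rightarrow> real" where
  "mesh_min N tp n = Min (Dt tp n ` {1..N n})"

definition partition_seq :: "real \<Rightarrow> (nat \<Rightarrow> nat) \<Rightarrow> (nat \<Rightarrow> nat \<Rightarrow> real) \<Rightarrow> bool" where
  "partition_seq T N tp \<longleftrightarrow> strict_mono N \<and>
     (\<forall>n. tp n 0 = 0 \<and> tp n (N n) = T \<and> (\<forall>k < N n. tp n k < tp n (Suc k)))"

text \<open>Asymptotic ratios. The ratio Dt(k-1)/Dt(k) is only defined for k >= 2
  (t^n_{-1} does not exist), so the uniform convergence is required over 2 <= k <= N n.\<close>
definition has_asymptotic_ratios ::
  "(nat \<Rightarrow> nat) \<Rightarrow> (nat \<Rightarrow> nat \<Rightarrow> real) \<Rightarrow> (nat \<Rightarrow> real) \<Rightarrow> bool" where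
  "has_asymptotic_ratios N tp ell \<longleftrightarrow>
     (\<forall>k\<ge>1. ell k > 0) \<and>
     (\<exists>c\<ge>1. \<forall>n. mesh_max N tp n \<le> c * mesh_min N tp n) \<and>
     (\<forall>\<epsilon>>0. \<forall>\<^sub>F n in sequentially. \<forall>k. 2 \<le> k \<and> k \<le> N n \<longrightarrow>
         \<bar>Dt tp n (k - 1) / Dt tp n k - ell k\<bar> < \<epsilon>)"

definition ratio_range :: "(nat \<Rightarrow> real) \<Rightarrow> real set" where
  "ratio_range ell = ell ` {1..}"

definition invariant_on :: "(real \<Rightarrow> real) \<Rightarrow> real set \<Rightarrow> bool" where
  "invariant_on g L \<longleftrightarrow> (\<forall>a\<in>L. \<forall>b\<in>L. g a = g b)"

definition D2 :: "(nat \<Rightarrow> nat \<Rightarrow> real) \<Rightarrow> (real \<Rightarrow> real) \<Rightarrow> nat \<Rightarrow> nat \<Rightarrow> real" where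
  "D2 tp x n k = Dt tp n k * x (tp n (k + 1)) + Dt tp n (k + 1) * x (tp n (k - 1))
                 - (Dt tp n k + Dt tp n (k + 1)) * x (tp n k)"

definition V2 :: "real \<Rightarrow> (nat \<Rightarrow> nat) \<Rightarrow> (nat \<Rightarrow> nat \<Rightarrow> real) \<Rightarrow> (real \<Rightarrow> real) \<Rightarrow> nat \<Rightarrow> real" where
  "V2 \<gamma> N tp x n = 2 * (\<Sum>k = 1..N n - 1.
      Dt tp n (k + 1) * (D2 tp x n k)\<^sup>2 /
      (Dt tp n k powr (\<gamma> + 1/2) * Dt tp n (k + 1) powr (\<gamma> + 1/2) * (Dt tp n k + Dt tp n (k + 1))))"

definition sigmaX :: "'a measure \<Rightarrow> (real \<Rightarrow> 'a \<Rightarrow> real) \<Rightarrow> real \<Rightarrow> real \<Rightarrow> real" where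
  "sigmaX M X s t = sqrt (\<integral>\<omega>. (X t \<omega> - X s \<omega>)\<^sup>2 \<partial>M)"

definition Psi :: "real \<Rightarrow> (real \<Rightarrow> real) set" where
  "Psi T = {\<phi>. continuous_on {0<..T} \<phi> \<and> (\<forall>h\<in>{0<..T}. \<phi> h \<ge> 0) \<and>
              (\<phi> \<longlongrightarrow> 0) (at_right 0) \<and>
              filterlim (\<lambda>h. \<phi> h / h) at_top (at_right 0) \<and>
              ((\<lambda>h. h * (\<phi> h / h) ^ 3) \<longlongrightarrow> 0) (at_right 0)}"

definition cond_C1 :: "'a measure \<Rightarrow> (real \<Rightarrow> 'a \<Rightarrow> real) \<Rightarrow> real \<Rightarrow> bool" where
  "cond_C1 M X \<gamma> \<longleftrightarrow> (\<lambda>\<delta>. sigmaX M X 0 \<delta>) \<in> O[at_right 0](\<lambda>\<delta>. \<delta> powr \<gamma>)"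

text \<open>(C2): the supremum tends to 0, written out as: for every eps it is eventually <= eps.\<close>
definition cond_C2 :: "'a measure \<Rightarrow> (real \<Rightarrow> 'a \<Rightarrow> real) \<Rightarrow> real \<Rightarrow> real \<Rightarrow> real \<Rightarrow> bool" where
  "cond_C2 M X T \<gamma> \<kappa> \<longleftrightarrow> (\<forall>\<phi>\<in>Psi T. \<forall>\<epsilon>>0. \<forall>\<^sub>F \<delta> in at_right 0.
      \<forall>t h. \<phi> \<delta> \<le> t \<and> t \<le> T - \<delta> \<and> 0 < h \<and> h \<le> \<delta> \<longrightarrow>
        \<bar>sigmaX M X t (t + h) / (\<kappa> * h powr \<gamma>) - 1\<bar> \<le> \<epsilon>)"

definition gfun :: "real \<Rightarrow> real \<Rightarrow> real" where
  "gfun \<gamma> x = (1 + x powr (2 * \<gamma> - 1) - (1 + x) powr (2 * \<gamma> - 1)) / x powr (\<gamma> - 1/2)"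

definition ell_step :: "(nat \<Rightarrow> nat) \<Rightarrow> (nat \<Rightarrow> nat \<Rightarrow> real) \<Rightarrow> (nat \<Rightarrow> real) \<Rightarrow> nat \<Rightarrow> real \<Rightarrow> real" where
  "ell_step N tp ell n t = (\<Sum>k = 1..N n - 1. ell k * indicator {tp n k..<tp n (k + 1)} t)"

end

theory Submission
  imports Defs "HOL-Real_Asymp.Real_Asymp"
begin

text \<open>Expanding the square of the second order difference and taking expectations writes
  E V2 as a sum over the cells of a rational expression in the two mesh sizes a = Dt k,
  b = Dt (k+1) and the three mean-square increments over the intervals of lengths a, b and
  a + b. If each increment of length h had mean square exactly kappa^2 h^(2 gamma), the k-th
  summand would be 2 kappa^2 b g(a/b). Away from 0, condition (C2) with phi(h) = h^(3/4)
  makes the error of this replacement a factor epsilon smaller than the summand, so the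
  total error is O(epsilon T). The O(m^(-1/4)) cells starting below 2 m^(3/4) (m the mesh)
  are handled by (C1) instead, each contributing O(m^(1 - gamma/2)); since gamma < 1 their
  total is o(1). What remains is the Riemann-type sum of b g(a/b): in case (a) every
  g(a/b) is uniformly close to g(l) by uniform continuity of g on a compact set of ratios;
  in case (b) it is the integral of a bounded step function converging pointwise to
  g(l(t)), and dominated convergence applies.\<close>

lemma powr_scale_le:
  fixes r x e :: real
  assumes "1 \<le> r" "0 < x" "0 \<le> e" "e \<le> 2"
  shows "(r * x) powr e \<le> r\<^sup>2 * x powr e"
proof -
  have "(r * x) powr e = r powr e * x powr e" using assms by (simp add: powr_mult)
  also have "\<dots> \<le> r powr 2 * x powr e" using assms by (intro mult_right_mono powr_mono) auto
  finally show ?thesis using assms by (simp add: powr_numeral)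
qed

lemma abs_square_diff_le:
  fixes s q \<epsilon> :: real
  assumes q: "0 < q" and "\<bar>s / q - 1\<bar> \<le> \<epsilon>" and "\<epsilon> \<le> 1"
  shows "\<bar>s\<^sup>2 - q\<^sup>2\<bar> \<le> 3 * \<epsilon> * q\<^sup>2"
proof -
  define r where "r = s / q"
  have "s\<^sup>2 - q\<^sup>2 = q\<^sup>2 * ((r - 1) * (r + 1))"
    using q by (simp add: r_def power2_eq_square algebra_simps)
  then have "\<bar>s\<^sup>2 - q\<^sup>2\<bar> = q\<^sup>2 * (\<bar>r - 1\<bar> * \<bar>r + 1\<bar>)"
    by (simp add: abs_mult)
  also have "\<dots> \<le> q\<^sup>2 * (\<epsilon> * 3)"
    using assms by (intro mult_left_mono mult_mono) (auto simp: r_def)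
  finally show ?thesis by (simp add: algebra_simps)
qed

lemma second_difference_square:
  fixes a b x1 x0 xm :: real
  shows "(a * x1 + b * xm - (a + b) * x0)\<^sup>2
    = a * (a + b) * (x1 - x0)\<^sup>2 + b * (a + b) * (x0 - xm)\<^sup>2 - a * b * (x1 - xm)\<^sup>2"
  by (simp add: power2_eq_square algebra_simps)

text \<open>The expectation of the k-th summand of V2, with a = Dt k, b = Dt (k+1) and Sa, Sb, Sab
  the mean-square increments over the intervals of lengths a, b and a + b.\<close>
definition v2_summand :: "real \<Rightarrow> real \<Rightarrow> real \<Rightarrow> real \<Rightarrow> real \<Rightarrow> real \<Rightarrow> real" where
  "v2_summand \<gamma> a b Sa Sb Sab = 2 * b * (a * (a + b) * Sb + b * (a + b) * Sa - a * b * Sab) /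
      (a powr (\<gamma> + 1/2) * b powr (\<gamma> + 1/2) * (a + b))"

lemma v2_summand_diff:
  "v2_summand \<gamma> a b Sa Sb Sab - v2_summand \<gamma> a b Sa' Sb' Sab'
    = v2_summand \<gamma> a b (Sa - Sa') (Sb - Sb') (Sab - Sab')"
  unfolding v2_summand_def by (simp add: diff_divide_distrib[symmetric] algebra_simps)

lemma v2_denominator_ge:
  fixes q a b \<gamma> :: real
  assumes "0 < q" "q \<le> a" "q \<le> b" "0 < \<gamma>"
  shows "2 * q powr (2 * \<gamma> + 2) \<le> a powr (\<gamma> + 1/2) * b powr (\<gamma> + 1/2) * (a + b)"
proof -
  have "q powr (2 * \<gamma> + 2) = q powr (\<gamma> + 1/2) * q powr (\<gamma> + 1/2) * q"
    using assms powr_add[of q "\<gamma> + 1/2" "\<gamma> + 1/2"] powr_add[of q "2 * \<gamma> + 1" 1]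
    by (simp add: add_ac)
  then have "2 * q powr (2 * \<gamma> + 2) = q powr (\<gamma> + 1/2) * q powr (\<gamma> + 1/2) * (2 * q)"
    by simp
  also have "\<dots> \<le> a powr (\<gamma> + 1/2) * b powr (\<gamma> + 1/2) * (a + b)"
    using assms by (intro mult_mono powr_mono2) auto
  finally show ?thesis .
qed

lemma abs_v2_summand_le:
  assumes g: "0 < \<gamma>" "\<gamma> < 1" and c: "c \<ge> 1" and m: "0 < m"
    and a: "m / c \<le> a" "a \<le> m" and b: "m / c \<le> b" "b \<le> m"
    and B: "\<bar>Sa\<bar> \<le> B" "\<bar>Sb\<bar> \<le> B" "\<bar>Sab\<bar> \<le> B"
  shows "\<bar>v2_summand \<gamma> a b Sa Sb Sab\<bar> \<le> 5 * c ^ 4 * m powr (1 - 2 * \<gamma>) * B"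
proof -
  define q where "q = m / c"
  have q: "0 < q" using m c by (simp add: q_def)
  have pos: "0 < a" "0 < b" using a b q q_def by auto
  have B0: "0 \<le> B" using B(1) by simp
  have num: "\<bar>a * (a + b) * Sb + b * (a + b) * Sa - a * b * Sab\<bar> \<le> 5 * m\<^sup>2 * B"
  proof -
    have "\<bar>a * (a + b) * Sb\<bar> \<le> m * (2 * m) * B" "\<bar>b * (a + b) * Sa\<bar> \<le> m * (2 * m) * B"
      "\<bar>a * b * Sab\<bar> \<le> m * m * B"
      unfolding abs_mult using a b pos B B0 by (intro mult_mono; simp)+
    then show ?thesis by (simp add: power2_eq_square)
  qed
  have den: "2 * q powr (2 * \<gamma> + 2) \<le> a powr (\<gamma> + 1/2) * b powr (\<gamma> + 1/2) * (a + b)"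
    using q a b g unfolding q_def by (intro v2_denominator_ge) auto
  have "\<bar>v2_summand \<gamma> a b Sa Sb Sab\<bar>
      = 2 * b * \<bar>a * (a + b) * Sb + b * (a + b) * Sa - a * b * Sab\<bar> /
        (a powr (\<gamma> + 1/2) * b powr (\<gamma> + 1/2) * (a + b))"
    unfolding v2_summand_def using pos by (simp add: abs_mult abs_divide)
  also have "\<dots> \<le> 2 * m * (5 * m\<^sup>2 * B) / (2 * q powr (2 * \<gamma> + 2))"
  proof (rule frac_le)
    show "2 * b * \<bar>a * (a + b) * Sb + b * (a + b) * Sa - a * b * Sab\<bar> \<le> 2 * m * (5 * m\<^sup>2 * B)"
      using num b pos B0 by (intro mult_mono) auto
  qed (use den q m B0 in auto)
  also have "\<dots> = 5 * (m powr 3 / q powr (2 * \<gamma> + 2)) * B"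
    using m by (simp add: power2_eq_square powr_numeral power3_eq_cube)
  also have "m powr 3 / q powr (2 * \<gamma> + 2) = c powr (2 * \<gamma> + 2) * m powr (1 - 2 * \<gamma>)"
  proof -
    have "m powr 3 / m powr (2 * \<gamma> + 2) = m powr (1 - 2 * \<gamma>)"
      using m powr_diff[of m 3 "2 * \<gamma> + 2"] by simp
    then show ?thesis
      unfolding q_def using m c by (simp add: powr_divide field_simps)
  qed
  also have "5 * (c powr (2 * \<gamma> + 2) * m powr (1 - 2 * \<gamma>)) * B
      \<le> 5 * (c ^ 4 * m powr (1 - 2 * \<gamma>)) * B"
  proof -
    have "c powr (2 * \<gamma> + 2) \<le> c powr 4" using c g by (intro powr_mono) auto
    then show ?thesis using c B0 by (simp add: powr_numeral mult_mono)
  qed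
  finally show ?thesis by (simp add: algebra_simps)
qed

lemma v2_summand_power_law:
  assumes a: "0 < a" and b: "0 < b"
  shows "v2_summand \<gamma> a b (k * a powr (2 * \<gamma>)) (k * b powr (2 * \<gamma>)) (k * (a + b) powr (2 * \<gamma>))
    = 2 * k * b * gfun \<gamma> (a / b)"
proof -
  define l where "l = a / b"
  define p q where "p = 2 * \<gamma>" and "q = \<gamma> + 1/2"
  have l: "0 < l" and al: "a = l * b" and ab: "a + b = (1 + l) * b"
    using a b by (auto simp: l_def field_simps)
  have lower: "x powr (e - 1) = x powr e / x" if "0 < x" for x e :: real
    using that by (simp add: powr_diff)
  have g: "gfun \<gamma> l = (1 + l powr p / l - (1 + l) powr p / (1 + l)) / (l powr q / l)"
    unfolding gfun_def using lower[of l p] lower[of "1 + l" p] lower[of l q] l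
    by (simp add: p_def q_def algebra_simps)
  have bq: "b powr q * b powr q = b powr p * b"
    using b powr_add[of b q q] powr_add[of b p 1] by (simp add: p_def q_def algebra_simps)
  have "v2_summand \<gamma> a b (k * a powr p) (k * b powr p) (k * (a + b) powr p)
      = 2 * b * (l * b * ((1 + l) * b) * (k * b powr p) + b * ((1 + l) * b) * (k * (l powr p * b powr p))
          - l * b * b * (k * ((1 + l) powr p * b powr p))) / (l powr q * (b powr q * b powr q) * ((1 + l) * b))"
    unfolding v2_summand_def q_def[symmetric] ab unfolding al using l b
    by (simp only: powr_mult less_imp_le add_pos_pos zero_less_one ac_simps)
  also have "\<dots> = 2 * k * b * ((1 + l powr p / l - (1 + l) powr p / (1 + l)) / (l powr q / l))"
    unfolding bq using l b by (simp add: divide_simps) (simp add: algebra_simps)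
  also have "\<dots> = 2 * k * b * gfun \<gamma> l"
    unfolding g ..
  finally show ?thesis unfolding l_def p_def .
qed

lemma gfun_isCont: "0 < x \<Longrightarrow> isCont (gfun \<gamma>) x"
  unfolding gfun_def by (intro continuous_intros) auto

lemma gfun_continuous_on: "0 < a \<Longrightarrow> continuous_on {a..b} (gfun \<gamma>)"
  by (intro continuous_at_imp_continuous_on ballI gfun_isCont) auto

lemma gfun_0 [simp]: "gfun \<gamma> 0 = 0"
  unfolding gfun_def by simp

lemma powr_3_4_in_Psi: "(\<lambda>h. h powr (3/4)) \<in> Psi T"
  unfolding Psi_def
proof (intro CollectI conjI ballI)
  show "continuous_on {0<..T} (\<lambda>h::real. h powr (3/4))" by (intro continuous_intros) auto
  show "((\<lambda>h::real. h powr (3/4)) \<longlongrightarrow> 0) (at_right 0)" by real_asymp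
  show "filterlim (\<lambda>h::real. h powr (3/4) / h) at_top (at_right 0)" by real_asymp
  show "((\<lambda>h::real. h * (h powr (3/4) / h) ^ 3) \<longlongrightarrow> 0) (at_right 0)" by real_asymp
qed auto

lemma has_integral_indicator_atLeastLessThan:
  fixes a b S T :: real
  assumes "S \<le> a" "a \<le> b" "b \<le> T"
  shows "((\<lambda>t. indicator {a..<b} t :: real) has_integral (b - a)) {S..T}"
proof -
  have "((\<lambda>t. if t \<in> {a..b} then 1 else 0 :: real) has_integral (b - a)) {S..T}"
    using has_integral_const_real[of "1::real" a b] assms
    by (subst has_integral_restrict_Int) (simp add: Int_absorb2)
  then show ?thesis
    by (rule has_integral_spike_finite[where S="{b}", rotated 2]) (auto simp: indicator_def)
qed

locale comparable_partitions =
  fixes T :: real and N :: "nat \<Rightarrow> nat" and tp :: "nat \<Rightarrow> nat \<Rightarrow> real" and c :: real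
  assumes T_pos: "T > 0" and partition: "partition_seq T N tp" and c_ge_1: "c \<ge> 1"
    and mesh_max_le: "\<And>n. mesh_max N tp n \<le> c * mesh_min N tp n"
begin

abbreviation "mmax n \<equiv> mesh_max N tp n"
abbreviation "mmin n \<equiv> mesh_min N tp n"

lemma tp_0: "tp n 0 = 0" and tp_N: "tp n (N n) = T"
  and tp_less_Suc: "k < N n \<Longrightarrow> tp n k < tp n (Suc k)" and strict_mono_N: "strict_mono N"
  using partition unfolding partition_seq_def by auto

lemma N_ge_1: "N n \<ge> 1"
  using tp_0[of n] tp_N[of n] T_pos by (cases "N n") auto

lemma tp_mono: "k \<le> j \<Longrightarrow> j \<le> N n \<Longrightarrow> tp n k \<le> tp n j"
proof (induction j rule: dec_induct)
  case (step i)
  then show ?case using tp_less_Suc[of i n] by simp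
qed simp

lemma tp_in_interval: "k \<le> N n \<Longrightarrow> tp n k \<in> {0..T}"
  using tp_mono[of 0 k n] tp_mono[of k "N n" n] tp_0 tp_N by auto

lemma Dt_pos: "1 \<le> k \<Longrightarrow> k \<le> N n \<Longrightarrow> Dt tp n k > 0"
  unfolding Dt_def using tp_less_Suc[of "k - 1" n] by simp

lemma Dt_le_mesh_max: "1 \<le> k \<Longrightarrow> k \<le> N n \<Longrightarrow> Dt tp n k \<le> mmax n"
  unfolding mesh_max_def by (rule Max_ge) auto

lemma mesh_min_le_Dt: "1 \<le> k \<Longrightarrow> k \<le> N n \<Longrightarrow> mmin n \<le> Dt tp n k"
  unfolding mesh_min_def by (rule Min_le) auto

lemma mesh_max_pos: "mmax n > 0"
  using Dt_pos[of 1 n] Dt_le_mesh_max[of 1 n] N_ge_1[of n] by simp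

lemma Dt_between: "1 \<le> k \<Longrightarrow> k \<le> N n \<Longrightarrow> mmax n / c \<le> Dt tp n k \<and> Dt tp n k \<le> mmax n"
proof -
  assume k: "1 \<le> k" "k \<le> N n"
  have "c * mmin n \<le> c * Dt tp n k"
    using mesh_min_le_Dt[OF k] c_ge_1 by (intro mult_left_mono) auto
  then have "mmax n \<le> c * Dt tp n k"
    using mesh_max_le[of n] by linarith
  then show ?thesis using c_ge_1 Dt_le_mesh_max[OF k] by (simp add: field_simps)
qed

lemma Dt_ratio_between:
  assumes "1 \<le> k" "k \<le> N n - 1"
  shows "1 / c \<le> Dt tp n k / Dt tp n (k + 1) \<and> Dt tp n k / Dt tp n (k + 1) \<le> c"
proof -
  have a: "mmax n / c \<le> Dt tp n k" "Dt tp n k \<le> mmax n"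
    and b: "mmax n / c \<le> Dt tp n (k + 1)" "Dt tp n (k + 1) \<le> mmax n"
    using Dt_between[of k n] Dt_between[of "k + 1" n] assms by auto
  have pos: "0 < mmax n / c" using mesh_max_pos[of n] c_ge_1 by simp
  have "1 / c = (mmax n / c) / mmax n" using mesh_max_pos[of n] by simp
  also have "\<dots> \<le> Dt tp n k / Dt tp n (k + 1)" using a b pos by (intro frac_le) auto
  finally have "1 / c \<le> Dt tp n k / Dt tp n (k + 1)" .
  moreover have "Dt tp n k / Dt tp n (k + 1) \<le> mmax n / (mmax n / c)"
    using a b pos by (intro frac_le) auto
  ultimately show ?thesis using mesh_max_pos[of n] c_ge_1 by simp
qed

lemma sum_Dt: "j \<le> N n \<Longrightarrow> (\<Sum>k = 1..j. Dt tp n k) = tp n j"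
  by (induction j) (auto simp: Dt_def tp_0)

lemma sum_Dt_Suc: "(\<Sum>k = 1..N n - 1. Dt tp n (k + 1)) = T - tp n 1"
proof -
  have "(\<Sum>k = 1..j. Dt tp n (k + 1)) = tp n (j + 1) - tp n 1" for j
    by (induction j) (auto simp: Dt_def)
  then show ?thesis using N_ge_1[of n] tp_N[of n] by simp
qed

lemma tp_ge_mesh_min: "j \<le> N n \<Longrightarrow> real j * mmin n \<le> tp n j"
  using sum_mono[of "{1..j}" "\<lambda>_. mmin n" "Dt tp n"] mesh_min_le_Dt[of _ n] sum_Dt[of j n]
  by auto

lemma N_mesh_max_le: "real (N n) * mmax n \<le> c * T"
proof -
  have "real (N n) * mmax n \<le> real (N n) * (c * mmin n)"
    using mesh_max_le[of n] by (simp add: mult_left_mono)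
  also have "\<dots> = c * (real (N n) * mmin n)" by simp
  also have "\<dots> \<le> c * T" using tp_ge_mesh_min[of "N n" n] tp_N c_ge_1 by simp
  finally show ?thesis .
qed

lemma mesh_max_tendsto_0: "mmax \<longlonglongrightarrow> 0"
proof (rule tendsto_sandwich[of "\<lambda>_. 0" _ _ "\<lambda>n. c * T / real n"])
  show "\<forall>\<^sub>F n in sequentially. mmax n \<le> c * T / real n"
    using eventually_gt_at_top[of 0]
  proof eventually_elim
    case (elim n)
    have "real n * mmax n \<le> real (N n) * mmax n"
      using strict_mono_imp_increasing[OF strict_mono_N, of n] mesh_max_pos[of n]
      by (simp add: mult_right_mono)
    also have "\<dots> \<le> c * T" by (rule N_mesh_max_le)
    finally show ?case using elim by (simp add: field_simps)
  qed
  show "(\<lambda>n. c * T / real n) \<longlonglongrightarrow> 0"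
    by (intro tendsto_divide_0[OF tendsto_const]
        filterlim_at_top_imp_at_infinity[OF filterlim_real_sequentially])
qed (auto simp: less_imp_le mesh_max_pos)

lemma mesh_max_le_powr: "mmax n \<le> 1 \<Longrightarrow> mmax n \<le> mmax n powr (3/4)"
  using powr_mono'[of "3/4" 1 "mmax n"] mesh_max_pos[of n] by simp

lemma tp_1_le_mesh_max: "tp n 1 \<le> mmax n"
  using Dt_le_mesh_max[of 1 n] N_ge_1[of n] by (simp add: Dt_def tp_0)

lemma eventually_tp_1_le: "0 < t \<Longrightarrow> \<forall>\<^sub>F n in sequentially. tp n 1 \<le> t"
  by (rule eventually_mono[OF order_tendstoD(2)[OF mesh_max_tendsto_0]])
    (use tp_1_le_mesh_max in \<open>auto intro: order_trans less_imp_le\<close>)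

lemma cell_exists:
  assumes "tp n 1 \<le> t" "t < T"
  obtains j where "1 \<le> j" "j \<le> N n - 1" "tp n j \<le> t" "t < tp n (j + 1)"
proof -
  have ex: "\<exists>j<K. tp n j \<le> t \<and> t < tp n (Suc j)" if "t < tp n K" "K \<le> N n" for K
    using that
  proof (induction K)
    case (Suc K)
    then show ?case by (cases "t < tp n K") (auto intro: less_SucI)
  qed (use assms tp_mono[of 0 1 n] N_ge_1[of n] tp_0 in auto)
  obtain j where "j < N n" "tp n j \<le> t" "t < tp n (Suc j)"
    using ex[of "N n"] assms tp_N by auto
  moreover have "j \<noteq> 0" using calculation assms by (cases j) auto
  ultimately show ?thesis by (intro that[of j]) auto
qed

lemma step_sum_in_cell:
  assumes "1 \<le> j" "j \<le> N n - 1" "tp n j \<le> t" "t < tp n (j + 1)"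
  shows "(\<Sum>k = 1..N n - 1. f k * indicator {tp n k..<tp n (k + 1)} t) = (f j :: real)"
proof -
  have j: "j \<le> N n" using assms by linarith
  have "t \<notin> {tp n k..<tp n (k + 1)}" if "k \<in> {1..N n - 1} - {j}" for k
  proof (cases "k < j")
    case True
    then show ?thesis using tp_mono[of "k + 1" j n] j assms by auto
  next
    case False
    with that have "j + 1 \<le> k" "k \<le> N n" by auto
    then show ?thesis using tp_mono[of "j + 1" k n] assms by auto
  qed
  then have "(\<Sum>k = 1..N n - 1. f k * indicator {tp n k..<tp n (k + 1)} t)
      = (\<Sum>k\<in>{j}. f k * indicator {tp n k..<tp n (k + 1)} t)"
    by (intro sum.mono_neutral_right) (use assms in auto)
  also have "\<dots> = f j" using assms by simp
  finally show ?thesis .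
qed

lemma step_sum_outside:
  assumes "t < tp n 1 \<or> T \<le> t"
  shows "(\<Sum>k = 1..N n - 1. f k * indicator {tp n k..<tp n (k + 1)} t) = (0 :: real)"
proof (intro sum.neutral ballI)
  fix k assume k: "k \<in> {1..N n - 1}"
  then have "tp n 1 \<le> tp n k" "tp n (k + 1) \<le> T"
    using tp_mono[of 1 k n] tp_mono[of "k + 1" "N n" n] tp_N by auto
  then show "f k * indicator {tp n k..<tp n (k + 1)} t = 0" using assms by auto
qed

lemma card_cells_near_0_le:
  assumes "mmax n \<le> 1"
  shows "real (card ({1..N n - 1} \<inter> {k. tp n (k - 1) < 2 * mmax n powr (3/4)}))
     \<le> (c + 1) * (2 * mmax n powr (3/4) / mmax n)"
proof -
  define u where "u = 2 * mmax n powr (3/4)"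
  define m where "m = mmax n"
  have m: "0 < m" and mu: "m \<le> u"
    using mesh_max_pos[of n] mesh_max_le_powr[OF assms] unfolding m_def u_def by auto
  have p: "m / c \<le> mmin n" "0 < m / c"
    using mesh_max_le[of n] c_ge_1 m by (auto simp: m_def field_simps)
  have "{1..N n - 1} \<inter> {k. tp n (k - 1) < u} \<subseteq> {1..nat \<lceil>u / mmin n\<rceil>}"
  proof
    fix k assume k: "k \<in> {1..N n - 1} \<inter> {k. tp n (k - 1) < u}"
    moreover have "k - 1 \<le> N n" using k by auto
    ultimately have "real (k - 1) * mmin n < u" using tp_ge_mesh_min[of "k - 1" n] by auto
    then have "real (k - 1) < u / mmin n" using p by (simp add: field_simps)
    also have "\<dots> \<le> of_int \<lceil>u / mmin n\<rceil>" by (rule le_of_int_ceiling)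
    finally have "int (k - 1) < \<lceil>u / mmin n\<rceil>" by linarith
    then show "k \<in> {1..nat \<lceil>u / mmin n\<rceil>}" using k by auto
  qed
  then have "real (card ({1..N n - 1} \<inter> {k. tp n (k - 1) < u})) \<le> real (nat \<lceil>u / mmin n\<rceil>)"
    using card_mono[of "{1..nat \<lceil>u / mmin n\<rceil>}"] by fastforce
  also have "\<dots> \<le> u / mmin n + 1"
    using p m mu of_int_ceiling_le_add_one[of "u / mmin n"] by (simp add: of_nat_nat)
  finally have card: "real (card ({1..N n - 1} \<inter> {k. tp n (k - 1) < u})) \<le> u / mmin n + 1" .
  have "u / mmin n \<le> u / (m / c)"
    using p mu m mult_pos_pos[of "mmin n" "m / c"] by (intro divide_left_mono) auto
  also have "\<dots> = c * (u / m)" using m c_ge_1 by simp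
  finally have ratio: "u / mmin n \<le> c * (u / m)" .
  have "1 \<le> u / m" using mu m by simp
  then have "real (card ({1..N n - 1} \<inter> {k. tp n (k - 1) < u})) \<le> c * (u / m) + u / m"
    using card ratio by linarith
  then show ?thesis
    unfolding u_def[symmetric] unfolding m_def[symmetric] by (simp only: distrib_right mult_1)
qed

lemma weighted_sum_tendsto:
  assumes "\<And>e. e > 0 \<Longrightarrow> \<forall>\<^sub>F n in sequentially. \<forall>k\<in>{1..N n - 1}. \<bar>f n k - L\<bar> \<le> e"
  shows "(\<lambda>n. \<Sum>k = 1..N n - 1. Dt tp n (k + 1) * f n k) \<longlonglongrightarrow> L * T"
proof (rule tendstoI)
  fix e :: real assume e: "e > 0"
  have close: "\<forall>\<^sub>F n in sequentially. \<forall>k\<in>{1..N n - 1}. \<bar>f n k - L\<bar> \<le> e / (2 * T)"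
    using assms e T_pos by simp
  have small: "\<forall>\<^sub>F n in sequentially. \<bar>L\<bar> * mmax n < e / 2"
    using order_tendstoD(2)[OF tendsto_mult_right_zero[OF mesh_max_tendsto_0, of "\<bar>L\<bar>"], of "e / 2"] e
    by simp
  show "\<forall>\<^sub>F n in sequentially. dist (\<Sum>k = 1..N n - 1. Dt tp n (k + 1) * f n k) (L * T) < e"
    using close small
  proof eventually_elim
    case (elim n)
    have tp1: "0 \<le> tp n 1" "tp n 1 \<le> mmax n"
      using tp_in_interval[of 1 n] N_ge_1[of n] tp_1_le_mesh_max by auto
    have "(\<Sum>k = 1..N n - 1. Dt tp n (k + 1) * (f n k - L))
        = (\<Sum>k = 1..N n - 1. Dt tp n (k + 1) * f n k) - (T - tp n 1) * L"
      unfolding right_diff_distrib sum_subtractf sum_distrib_right[symmetric] sum_Dt_Suc ..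
    then have "(\<Sum>k = 1..N n - 1. Dt tp n (k + 1) * f n k) - L * T
        = (\<Sum>k = 1..N n - 1. Dt tp n (k + 1) * (f n k - L)) - L * tp n 1"
      by (simp add: algebra_simps)
    also have "\<bar>\<dots>\<bar> \<le> (\<Sum>k = 1..N n - 1. Dt tp n (k + 1) * (e / (2 * T))) + \<bar>L\<bar> * mmax n"
    proof -
      have "\<bar>Dt tp n (k + 1) * (f n k - L)\<bar> \<le> Dt tp n (k + 1) * (e / (2 * T))"
        if "k \<in> {1..N n - 1}" for k
      proof -
        have "0 < Dt tp n (k + 1)" using Dt_pos[of "k + 1" n] that N_ge_1[of n] by auto
        moreover have "\<bar>f n k - L\<bar> \<le> e / (2 * T)" using elim(1) that by blast
        ultimately show ?thesis unfolding abs_mult by (intro mult_mono) auto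
      qed
      then have "\<bar>\<Sum>k = 1..N n - 1. Dt tp n (k + 1) * (f n k - L)\<bar>
          \<le> (\<Sum>k = 1..N n - 1. Dt tp n (k + 1) * (e / (2 * T)))"
        by (intro order_trans[OF sum_abs] sum_mono)
      moreover have "\<bar>L * tp n 1\<bar> \<le> \<bar>L\<bar> * mmax n"
        using tp1 by (simp add: abs_mult mult_left_mono)
      ultimately show ?thesis by linarith
    qed
    also have "(\<Sum>k = 1..N n - 1. Dt tp n (k + 1) * (e / (2 * T))) = (T - tp n 1) * (e / (2 * T))"
      unfolding sum_distrib_right[symmetric] sum_Dt_Suc ..
    also have "\<dots> \<le> e / 2"
      using tp1 e T_pos by (simp add: field_simps)
    finally show ?case using elim(2) by (simp add: dist_real_def)
  qed
qed

definition ratio_step :: "nat \<Rightarrow> real \<Rightarrow> real" where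
  "ratio_step n t = (\<Sum>k = 1..N n - 1. (Dt tp n k / Dt tp n (k + 1)) * indicator {tp n k..<tp n (k + 1)} t)"

lemma ratio_step_in_cell:
  "1 \<le> j \<Longrightarrow> j \<le> N n - 1 \<Longrightarrow> tp n j \<le> t \<Longrightarrow> t < tp n (j + 1) \<Longrightarrow>
    ratio_step n t = Dt tp n j / Dt tp n (j + 1)"
  unfolding ratio_step_def by (rule step_sum_in_cell)

lemma comp_ratio_step:
  fixes f :: "real \<Rightarrow> real"
  assumes "f 0 = 0"
  shows "f (ratio_step n t)
    = (\<Sum>k = 1..N n - 1. f (Dt tp n k / Dt tp n (k + 1)) * indicator {tp n k..<tp n (k + 1)} t)"
proof (cases "tp n 1 \<le> t \<and> t < T")
  case True
  then obtain j where j: "1 \<le> j" "j \<le> N n - 1" "tp n j \<le> t" "t < tp n (j + 1)"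
    using cell_exists by blast
  show ?thesis
    unfolding ratio_step_in_cell[OF j]
    using step_sum_in_cell[OF j, where f = "\<lambda>k. f (Dt tp n k / Dt tp n (k + 1))"] by simp
next
  case False
  then have out: "t < tp n 1 \<or> T \<le> t" by auto
  show ?thesis unfolding ratio_step_def step_sum_outside[OF out] using assms by simp
qed

lemma ratio_step_between: "ratio_step n t = 0 \<or> (1 / c \<le> ratio_step n t \<and> ratio_step n t \<le> c)"
proof (cases "tp n 1 \<le> t \<and> t < T")
  case True
  then obtain j where j: "1 \<le> j" "j \<le> N n - 1" "tp n j \<le> t" "t < tp n (j + 1)"
    using cell_exists by blast
  show ?thesis unfolding ratio_step_in_cell[OF j] using Dt_ratio_between[OF j(1,2)] by simp
next
  case False
  then have out: "t < tp n 1 \<or> T \<le> t" by auto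
  show ?thesis unfolding ratio_step_def step_sum_outside[OF out] by simp
qed

lemma has_integral_comp_ratio_step:
  fixes f :: "real \<Rightarrow> real"
  assumes "f 0 = 0"
  shows "((\<lambda>t. f (ratio_step n t)) has_integral
     (\<Sum>k = 1..N n - 1. f (Dt tp n k / Dt tp n (k + 1)) * Dt tp n (k + 1))) {0..T}"
  unfolding comp_ratio_step[of f, OF assms]
proof (intro has_integral_sum ballI finite_atLeastAtMost)
  fix k assume k: "k \<in> {1..N n - 1}"
  have "((\<lambda>t. indicator {tp n k..<tp n (k + 1)} t :: real) has_integral (tp n (k + 1) - tp n k)) {0..T}"
    using tp_in_interval[of k n] tp_in_interval[of "k + 1" n] tp_mono[of k "k + 1" n] k
    by (intro has_integral_indicator_atLeastLessThan) auto
  then show "((\<lambda>t. f (Dt tp n k / Dt tp n (k + 1)) * indicator {tp n k..<tp n (k + 1)} t) has_integral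
      f (Dt tp n k / Dt tp n (k + 1)) * Dt tp n (k + 1)) {0..T}"
    unfolding Dt_def by (simp add: has_integral_mult_right)
qed

context
  fixes ell :: "nat \<Rightarrow> real" and ellf :: "real \<Rightarrow> real"
  assumes ell_step_uniform:
    "\<And>\<epsilon>. \<epsilon> > 0 \<Longrightarrow> \<forall>\<^sub>F n in sequentially. \<forall>t\<in>{tp n 1..<T}. \<bar>ell_step N tp ell n t - ellf t\<bar> \<le> \<epsilon>"
begin

lemma ell_step_in_cell:
  "1 \<le> j \<Longrightarrow> j \<le> N n - 1 \<Longrightarrow> tp n j \<le> t \<Longrightarrow> t < tp n (j + 1) \<Longrightarrow> ell_step N tp ell n t = ell j"
  unfolding ell_step_def by (rule step_sum_in_cell)

lemma limit_right_oscillation_le: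
  assumes t: "0 < t" "t < T" and \<epsilon>: "\<epsilon> > 0"
  obtains r where "r > 0" "\<And>y. t \<le> y \<Longrightarrow> y < t + r \<Longrightarrow> \<bar>ellf y - ellf t\<bar> \<le> 2 * \<epsilon>"
proof -
  obtain n where close: "\<forall>s\<in>{tp n 1..<T}. \<bar>ell_step N tp ell n s - ellf s\<bar> \<le> \<epsilon>"
    and t1: "tp n 1 \<le> t"
    using eventually_conj[OF ell_step_uniform[OF \<epsilon>] eventually_tp_1_le[OF t(1)]]
    by (fastforce simp: eventually_sequentially)
  obtain j where j: "1 \<le> j" "j \<le> N n - 1" "tp n j \<le> t" "t < tp n (j + 1)"
    using cell_exists[OF t1 t(2)] by blast
  have cell: "tp n 1 \<le> tp n j" "tp n (j + 1) \<le> T"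
    using tp_mono[of 1 j n] tp_in_interval[of "j + 1" n] j by auto
  have near_ell_j: "\<bar>ell j - ellf s\<bar> \<le> \<epsilon>" if "t \<le> s" "s < tp n (j + 1)" for s
  proof -
    have "s \<in> {tp n 1..<T}" using that j cell by auto
    moreover have "ell_step N tp ell n s = ell j" using that j by (intro ell_step_in_cell) auto
    ultimately show ?thesis using close by force
  qed
  show ?thesis
  proof
    show "tp n (j + 1) - t > 0" using j by simp
    fix y assume "t \<le> y" "y < t + (tp n (j + 1) - t)"
    then show "\<bar>ellf y - ellf t\<bar> \<le> 2 * \<epsilon>"
      using near_ell_j[of y] near_ell_j[of t] j by auto
  qed
qed

lemma ratio_step_tendsto:
  assumes ratios: "has_asymptotic_ratios N tp ell" and t: "0 < t" "t < T"
  shows "(\<lambda>n. ratio_step n t) \<longlonglongrightarrow> ellf t"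
proof (rule tendstoI)
  fix e :: real assume "e > 0"
  define \<epsilon> where "\<epsilon> = e / 5"
  have \<epsilon>: "\<epsilon> > 0" using \<open>e > 0\<close> by (simp add: \<epsilon>_def)
  obtain r where r: "r > 0" and osc: "\<And>y. t \<le> y \<Longrightarrow> y < t + r \<Longrightarrow> \<bar>ellf y - ellf t\<bar> \<le> 2 * \<epsilon>"
    using limit_right_oscillation_le[OF t \<epsilon>] by blast
  have ratio_close: "\<forall>\<^sub>F n in sequentially. \<forall>k. 2 \<le> k \<and> k \<le> N n \<longrightarrow> \<bar>Dt tp n (k - 1) / Dt tp n k - ell k\<bar> < \<epsilon>"
    using ratios \<epsilon> unfolding has_asymptotic_ratios_def by blast
  have "0 < min r (T - t)" using r t by simp
  from order_tendstoD(2)[OF mesh_max_tendsto_0 this]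
  have fine: "\<forall>\<^sub>F n in sequentially. mmax n < min r (T - t)" .
  show "\<forall>\<^sub>F n in sequentially. dist (ratio_step n t) (ellf t) < e"
    using ratio_close ell_step_uniform[OF \<epsilon>] eventually_tp_1_le[OF t(1)] fine
  proof eventually_elim
    case (elim n)
    obtain k where k: "1 \<le> k" "k \<le> N n - 1" "tp n k \<le> t" "t < tp n (k + 1)"
      using cell_exists[OF elim(3) t(2)] by blast
    have kN: "k + 1 \<le> N n" using k N_ge_1[of n] by arith
    then have next_cell: "tp n (k + 1) \<le> t + mmax n"
      using Dt_le_mesh_max[of "k + 1" n] k unfolding Dt_def by auto
    then have "tp n (k + 1) < T" using elim(4) by simp
    then have "k + 1 \<noteq> N n" using tp_N[of n] by auto
    then have k1: "k + 1 \<le> N n - 1" using kN by arith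
    have "tp n (k + 1) \<in> {tp n 1..<T}"
      using tp_mono[of 1 "k + 1" n] k1 \<open>tp n (k + 1) < T\<close> by auto
    moreover have "ell_step N tp ell n (tp n (k + 1)) = ell (k + 1)"
      using tp_less_Suc[of "k + 1" n] k1 by (intro ell_step_in_cell) auto
    ultimately have "\<bar>ell (k + 1) - ellf (tp n (k + 1))\<bar> \<le> \<epsilon>" using elim(2) by force
    moreover have "\<bar>Dt tp n k / Dt tp n (k + 1) - ell (k + 1)\<bar> < \<epsilon>"
      using elim(1)[rule_format, of "k + 1"] k k1 by auto
    moreover have "\<bar>ellf (tp n (k + 1)) - ellf t\<bar> \<le> 2 * \<epsilon>"
      using osc k next_cell elim(4) by auto
    moreover have "ratio_step n t = Dt tp n k / Dt tp n (k + 1)"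
      by (rule ratio_step_in_cell[OF k])
    ultimately have "\<bar>ratio_step n t - ellf t\<bar> < 4 * \<epsilon>" by linarith
    then show ?case using \<open>e > 0\<close> by (simp add: dist_real_def \<epsilon>_def)
  qed
qed

end

end

definition msq_incr :: "'a measure \<Rightarrow> (real \<Rightarrow> 'a \<Rightarrow> real) \<Rightarrow> real \<Rightarrow> real \<Rightarrow> real" where
  "msq_incr M X s t = (\<integral>\<omega>. (X t \<omega> - X s \<omega>)\<^sup>2 \<partial>M)"

lemma msq_incr_nonneg: "msq_incr M X s t \<ge> 0"
  unfolding msq_incr_def by (rule integral_nonneg_AE) auto

lemma msq_incr_same [simp]: "msq_incr M X t t = 0"
  unfolding msq_incr_def by simp

lemma sigmaX_squared: "(sigmaX M X s t)\<^sup>2 = msq_incr M X s t"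
  unfolding sigmaX_def msq_incr_def[symmetric] using msq_incr_nonneg by simp

lemma cond_C1_msq_incr:
  assumes "cond_C1 M X \<gamma>"
  obtains b C where "b > 0" "\<And>x. 0 < x \<Longrightarrow> x < b \<Longrightarrow> msq_incr M X 0 x \<le> C\<^sup>2 * x powr (2 * \<gamma>)"
proof -
  obtain C where "\<forall>\<^sub>F x in at_right 0. norm (sigmaX M X 0 x) \<le> C * norm (x powr \<gamma>)"
    using assms unfolding cond_C1_def by (elim landau_o.bigE) auto
  then obtain b where b: "b > 0"
    and bound: "\<And>x. 0 < x \<Longrightarrow> x < b \<Longrightarrow> \<bar>sigmaX M X 0 x\<bar> \<le> C * x powr \<gamma>"
    unfolding eventually_at_right_field by auto
  show ?thesis
  proof (rule that[OF b])
    fix x :: real assume x: "0 < x" "x < b"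
    have "(sigmaX M X 0 x)\<^sup>2 \<le> (C * x powr \<gamma>)\<^sup>2"
      using bound[OF x] by (metis abs_ge_zero order_trans power2_abs power_mono)
    also have "\<dots> = C\<^sup>2 * x powr (2 * \<gamma>)"
      using x by (simp add: power_mult_distrib powr_mult_base powr_add[symmetric] power2_eq_square)
    finally show "msq_incr M X 0 x \<le> C\<^sup>2 * x powr (2 * \<gamma>)" unfolding sigmaX_squared .
  qed
qed

lemma cond_C2_msq_incr:
  assumes "cond_C2 M X T \<gamma> \<kappa>" "\<kappa> > 0" "0 < \<epsilon>" "\<epsilon> \<le> 1"
  obtains d where "d > 0" "\<And>t h. 0 < h \<Longrightarrow> h < d \<Longrightarrow> h powr (3/4) \<le> t \<Longrightarrow> t + h \<le> T \<Longrightarrow>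
      \<bar>msq_incr M X t (t + h) - \<kappa>\<^sup>2 * h powr (2 * \<gamma>)\<bar> \<le> 3 * \<epsilon> * \<kappa>\<^sup>2 * h powr (2 * \<gamma>)"
proof -
  from assms(1) have "\<forall>\<phi>\<in>Psi T. \<forall>\<epsilon>>0. \<forall>\<^sub>F \<delta> in at_right 0.
      \<forall>t h. \<phi> \<delta> \<le> t \<and> t \<le> T - \<delta> \<and> 0 < h \<and> h \<le> \<delta> \<longrightarrow>
        \<bar>sigmaX M X t (t + h) / (\<kappa> * h powr \<gamma>) - 1\<bar> \<le> \<epsilon>"
    unfolding cond_C2_def .
  from bspec[OF this powr_3_4_in_Psi[of T]] assms(3)
  have "\<forall>\<^sub>F \<delta> in at_right 0. \<forall>t h. \<delta> powr (3/4) \<le> t \<and> t \<le> T - \<delta> \<and> 0 < h \<and> h \<le> \<delta> \<longrightarrow>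
      \<bar>sigmaX M X t (t + h) / (\<kappa> * h powr \<gamma>) - 1\<bar> \<le> \<epsilon>"
    by blast
  then obtain d where d: "d > 0" and ratio: "\<And>\<delta>. 0 < \<delta> \<Longrightarrow> \<delta> < d \<Longrightarrow>
      \<forall>t h. \<delta> powr (3/4) \<le> t \<and> t \<le> T - \<delta> \<and> 0 < h \<and> h \<le> \<delta> \<longrightarrow>
        \<bar>sigmaX M X t (t + h) / (\<kappa> * h powr \<gamma>) - 1\<bar> \<le> \<epsilon>"
    unfolding eventually_at_right_field by auto
  show ?thesis
  proof (rule that[OF d])
    fix t h assume h: "0 < h" "h < d" "h powr (3/4) \<le> t" "t + h \<le> T"
    have "\<bar>(sigmaX M X t (t + h))\<^sup>2 - (\<kappa> * h powr \<gamma>)\<^sup>2\<bar> \<le> 3 * \<epsilon> * (\<kappa> * h powr \<gamma>)\<^sup>2"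
      using ratio[OF h(1,2)] h assms(2,4) by (intro abs_square_diff_le) auto
    moreover have "(\<kappa> * h powr \<gamma>)\<^sup>2 = \<kappa>\<^sup>2 * h powr (2 * \<gamma>)"
      using h by (simp add: power_mult_distrib power2_eq_square powr_add[symmetric])
    ultimately show "\<bar>msq_incr M X t (t + h) - \<kappa>\<^sup>2 * h powr (2 * \<gamma>)\<bar> \<le> 3 * \<epsilon> * \<kappa>\<^sup>2 * h powr (2 * \<gamma>)"
      unfolding sigmaX_squared by (simp add: mult.assoc)
  qed
qed

locale sq_integrable_process =
  fixes M :: "'a measure" and X :: "real \<Rightarrow> 'a \<Rightarrow> real" and T :: real
  assumes measurable: "\<And>t. t \<in> {0..T} \<Longrightarrow> X t \<in> borel_measurable M"
    and integrable_sq: "\<And>t. t \<in> {0..T} \<Longrightarrow> integrable M (\<lambda>\<omega>. (X t \<omega>)\<^sup>2)"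
begin

lemma integrable_sq_diff:
  assumes "s \<in> {0..T}" "t \<in> {0..T}"
  shows "integrable M (\<lambda>\<omega>. (X t \<omega> - X s \<omega>)\<^sup>2)"
proof (rule Bochner_Integration.integrable_bound)
  show "integrable M (\<lambda>\<omega>. 2 * (X t \<omega>)\<^sup>2 + 2 * (X s \<omega>)\<^sup>2)"
    using integrable_sq assms by auto
  show "(\<lambda>\<omega>. (X t \<omega> - X s \<omega>)\<^sup>2) \<in> borel_measurable M"
    using measurable assms by measurable
  have "(X t \<omega> - X s \<omega>)\<^sup>2 \<le> 2 * (X t \<omega>)\<^sup>2 + 2 * (X s \<omega>)\<^sup>2" for \<omega>
    using zero_le_square[of "X t \<omega> + X s \<omega>"] by (simp add: power2_eq_square algebra_simps)
  then show "AE \<omega> in M. norm ((X t \<omega> - X s \<omega>)\<^sup>2) \<le> norm (2 * (X t \<omega>)\<^sup>2 + 2 * (X s \<omega>)\<^sup>2)"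
    by simp
qed

lemma msq_incr_le:
  assumes "s \<in> {0..T}" "t \<in> {0..T}"
  shows "msq_incr M X s t \<le> 2 * msq_incr M X 0 s + 2 * msq_incr M X 0 t"
proof -
  have "msq_incr M X s t \<le> (\<integral>\<omega>. 2 * (X s \<omega> - X 0 \<omega>)\<^sup>2 + 2 * (X t \<omega> - X 0 \<omega>)\<^sup>2 \<partial>M)"
    unfolding msq_incr_def
  proof (rule integral_mono)
    fix \<omega>
    show "(X t \<omega> - X s \<omega>)\<^sup>2 \<le> 2 * (X s \<omega> - X 0 \<omega>)\<^sup>2 + 2 * (X t \<omega> - X 0 \<omega>)\<^sup>2"
      using zero_le_square[of "X t \<omega> + X s \<omega> - 2 * X 0 \<omega>"] by (simp add: power2_eq_square algebra_simps)
  qed (use integrable_sq_diff assms in auto)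
  also have "\<dots> = 2 * msq_incr M X 0 s + 2 * msq_incr M X 0 t"
    unfolding msq_incr_def using integrable_sq_diff assms by simp
  finally show ?thesis .
qed

lemma msq_incr_le_near_0:
  assumes C1: "\<And>x. 0 < x \<Longrightarrow> x < b \<Longrightarrow> msq_incr M X 0 x \<le> C\<^sup>2 * x powr (2 * \<gamma>)"
    and "0 \<le> \<gamma>" "v < b" "s \<in> {0..min v T}" "t \<in> {0..min v T}"
  shows "msq_incr M X s t \<le> 4 * C\<^sup>2 * v powr (2 * \<gamma>)"
proof -
  have from_0: "msq_incr M X 0 x \<le> C\<^sup>2 * v powr (2 * \<gamma>)" if "x \<in> {0..min v T}" for x
  proof (cases "x = 0")
    case False
    then have "msq_incr M X 0 x \<le> C\<^sup>2 * x powr (2 * \<gamma>)" using that assms(3) by (intro C1) auto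
    also have "\<dots> \<le> C\<^sup>2 * v powr (2 * \<gamma>)" using that assms(2) by (intro mult_left_mono powr_mono2) auto
    finally show ?thesis .
  qed simp
  have "msq_incr M X s t \<le> 2 * msq_incr M X 0 s + 2 * msq_incr M X 0 t"
    using assms by (intro msq_incr_le) auto
  also have "\<dots> \<le> 4 * C\<^sup>2 * v powr (2 * \<gamma>)" using from_0[of s] from_0[of t] assms by simp
  finally show ?thesis .
qed

lemma expectation_V2:
  assumes "\<And>k. k \<le> N n \<Longrightarrow> tp n k \<in> {0..T}"
  shows "(\<integral>\<omega>. V2 \<gamma> N tp (\<lambda>s. X s \<omega>) n \<partial>M) =
    (\<Sum>k = 1..N n - 1. v2_summand \<gamma> (Dt tp n k) (Dt tp n (k + 1))
        (msq_incr M X (tp n (k - 1)) (tp n k)) (msq_incr M X (tp n k) (tp n (k + 1)))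
        (msq_incr M X (tp n (k - 1)) (tp n (k + 1))))"
proof -
  define a where "a k = Dt tp n k" for k
  define w where "w k = a (k + 1) / (a k powr (\<gamma> + 1/2) * a (k + 1) powr (\<gamma> + 1/2) * (a k + a (k + 1)))" for k
  define F where "F k \<omega> = w k * (a k * (a k + a (k + 1)) * (X (tp n (k + 1)) \<omega> - X (tp n k) \<omega>)\<^sup>2
        + a (k + 1) * (a k + a (k + 1)) * (X (tp n k) \<omega> - X (tp n (k - 1)) \<omega>)\<^sup>2
        - a k * a (k + 1) * (X (tp n (k + 1)) \<omega> - X (tp n (k - 1)) \<omega>)\<^sup>2)" for k \<omega>
  have V2_eq: "V2 \<gamma> N tp (\<lambda>s. X s \<omega>) n = 2 * (\<Sum>k = 1..N n - 1. F k \<omega>)" for \<omega>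
    unfolding V2_def D2_def F_def w_def a_def second_difference_square by simp
  have points: "tp n (k - 1) \<in> {0..T}" "tp n k \<in> {0..T}" "tp n (k + 1) \<in> {0..T}"
    if "k \<in> {1..N n - 1}" for k
    using assms that by auto
  have "integrable M (F k)" if "k \<in> {1..N n - 1}" for k
    unfolding F_def using points[OF that] integrable_sq_diff by auto
  then have "(\<integral>\<omega>. V2 \<gamma> N tp (\<lambda>s. X s \<omega>) n \<partial>M) = (\<Sum>k = 1..N n - 1. 2 * (\<integral>\<omega>. F k \<omega> \<partial>M))"
    unfolding V2_eq by (simp add: Bochner_Integration.integral_sum sum_distrib_left)
  also have "\<dots> = (\<Sum>k = 1..N n - 1. v2_summand \<gamma> (Dt tp n k) (Dt tp n (k + 1))
        (msq_incr M X (tp n (k - 1)) (tp n k)) (msq_incr M X (tp n k) (tp n (k + 1)))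
        (msq_incr M X (tp n (k - 1)) (tp n (k + 1))))"
  proof (rule sum.cong[OF refl])
    fix k assume "k \<in> {1..N n - 1}"
    then show "2 * (\<integral>\<omega>. F k \<omega> \<partial>M) = v2_summand \<gamma> (Dt tp n k) (Dt tp n (k + 1))
        (msq_incr M X (tp n (k - 1)) (tp n k)) (msq_incr M X (tp n k) (tp n (k + 1)))
        (msq_incr M X (tp n (k - 1)) (tp n (k + 1)))"
      unfolding F_def msq_incr_def v2_summand_def w_def a_def
      using points integrable_sq_diff by simp
  qed
  finally show ?thesis .
qed

end

lemma near_zero_rate_eq:
  fixes m \<gamma> :: real
  assumes "0 < m"
  shows "(2 * m powr (3/4) / m) * m powr (1 - 2 * \<gamma>) * (2 * m powr (3/4)) powr (2 * \<gamma>)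
       = 2 * 2 powr (2 * \<gamma>) * m powr (3/4 - \<gamma>/2)"
proof -
  have a: "(2 * m powr (3/4)) powr (2 * \<gamma>) = 2 powr (2 * \<gamma>) * m powr (3/4 * (2 * \<gamma>))"
    using assms by (simp add: powr_mult powr_powr)
  have b: "2 * m powr (3/4) / m = 2 * m powr (3/4 - 1)"
    using assms powr_diff[of m "3/4" 1] by simp
  have "(2 * m powr (3/4) / m) * m powr (1 - 2 * \<gamma>) * (2 * m powr (3/4)) powr (2 * \<gamma>)
      = 2 * 2 powr (2 * \<gamma>) * (m powr (3/4 - 1) * m powr (1 - 2 * \<gamma>) * m powr (3/4 * (2 * \<gamma>)))"
    unfolding a b by (simp only: mult_ac)
  also have "m powr (3/4 - 1) * m powr (1 - 2 * \<gamma>) * m powr (3/4 * (2 * \<gamma>))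
      = m powr ((3/4 - 1) + (1 - 2 * \<gamma>) + 3/4 * (2 * \<gamma>))"
    by (simp only: powr_add)
  also have "(3/4 - 1) + (1 - 2 * \<gamma>) + 3/4 * (2 * \<gamma>) = 3/4 - \<gamma>/2"
    by simp
  finally show ?thesis .
qed

lemma model_variance_le:
  fixes u x \<gamma> \<kappa> :: real
  assumes "0 < u" "0 < x" "x \<le> 2 * u" "0 < \<gamma>" "\<gamma> < 1"
  shows "\<bar>\<kappa>\<^sup>2 * x powr (2 * \<gamma>)\<bar> \<le> 4 * \<kappa>\<^sup>2 * u powr (2 * \<gamma>)"
proof -
  have "\<kappa>\<^sup>2 * x powr (2 * \<gamma>) \<le> \<kappa>\<^sup>2 * (2 * u) powr (2 * \<gamma>)"
    using assms by (intro mult_left_mono powr_mono2) auto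
  also have "\<dots> \<le> \<kappa>\<^sup>2 * (2\<^sup>2 * u powr (2 * \<gamma>))"
    using assms by (intro mult_left_mono powr_scale_le) auto
  finally show ?thesis by simp
qed

locale v2_setting = comparable_partitions T N tp c + sq_integrable_process M X T
  for T N tp c and M :: "'a measure" and X +
  fixes \<gamma> \<kappa> :: real
  assumes gamma_pos: "0 < \<gamma>" and gamma_less_1: "\<gamma> < 1" and kappa_pos: "\<kappa> > 0"
begin

definition exact_summand :: "nat \<Rightarrow> nat \<Rightarrow> real" where
  "exact_summand n k = v2_summand \<gamma> (Dt tp n k) (Dt tp n (k + 1))
     (msq_incr M X (tp n (k - 1)) (tp n k)) (msq_incr M X (tp n k) (tp n (k + 1)))
     (msq_incr M X (tp n (k - 1)) (tp n (k + 1)))"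

definition model_summand :: "nat \<Rightarrow> nat \<Rightarrow> real" where
  "model_summand n k = v2_summand \<gamma> (Dt tp n k) (Dt tp n (k + 1))
     (\<kappa>\<^sup>2 * Dt tp n k powr (2 * \<gamma>)) (\<kappa>\<^sup>2 * Dt tp n (k + 1) powr (2 * \<gamma>))
     (\<kappa>\<^sup>2 * (Dt tp n k + Dt tp n (k + 1)) powr (2 * \<gamma>))"

lemma model_summand_eq:
  "1 \<le> k \<Longrightarrow> k \<le> N n - 1 \<Longrightarrow>
    model_summand n k = 2 * \<kappa>\<^sup>2 * Dt tp n (k + 1) * gfun \<gamma> (Dt tp n k / Dt tp n (k + 1))"
  unfolding model_summand_def using Dt_pos[of k n] Dt_pos[of "k + 1" n]
  by (intro v2_summand_power_law) auto

lemma summand_error_bulk_le: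
  assumes \<epsilon>: "0 < \<epsilon>"
    and C2: "\<And>t h. 0 < h \<Longrightarrow> h < d \<Longrightarrow> h powr (3/4) \<le> t \<Longrightarrow> t + h \<le> T \<Longrightarrow>
        \<bar>msq_incr M X t (t + h) - \<kappa>\<^sup>2 * h powr (2 * \<gamma>)\<bar> \<le> 3 * \<epsilon> * \<kappa>\<^sup>2 * h powr (2 * \<gamma>)"
    and fine: "2 * mmax n < d"
    and k: "1 \<le> k" "k \<le> N n - 1"
    and away: "2 * mmax n powr (3/4) \<le> tp n (k - 1)"
  shows "\<bar>exact_summand n k - model_summand n k\<bar> \<le> 60 * c ^ 4 * \<kappa>\<^sup>2 * \<epsilon> * mmax n"
proof -
  define m a b where "m = mmax n" and "a = Dt tp n k" and "b = Dt tp n (k + 1)"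
  have m: "0 < m" using mesh_max_pos by (simp add: m_def)
  have ab: "m / c \<le> a" "a \<le> m" "m / c \<le> b" "b \<le> m"
    using Dt_between[of k n] Dt_between[of "k + 1" n] k unfolding m_def a_def b_def by auto
  have pos: "0 < a" "0 < b" using Dt_pos k unfolding a_def b_def by auto
  have tp_k: "tp n k = tp n (k - 1) + a" "tp n (k + 1) = tp n k + b"
    unfolding a_def b_def Dt_def using k by auto
  have end_le_T: "tp n (k + 1) \<le> T" using tp_in_interval[of "k + 1" n] k by auto
  have incr_close: "\<bar>msq_incr M X t (t + h) - \<kappa>\<^sup>2 * h powr (2 * \<gamma>)\<bar> \<le> 12 * \<epsilon> * \<kappa>\<^sup>2 * m powr (2 * \<gamma>)"
    if h: "0 < h" "h \<le> 2 * m" and t: "tp n (k - 1) \<le> t" "t + h \<le> T" for t h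
  proof -
    have "h powr (3/4) \<le> (2 * m) powr (3/4)" using h by (intro powr_mono2) auto
    also have "\<dots> = 2 powr (3/4) * m powr (3/4)" using m by (simp add: powr_mult)
    also have "\<dots> \<le> 2 * m powr (3/4)"
      using powr_mono[of "3/4" 1 "2::real"] by (intro mult_right_mono) auto
    finally have "h powr (3/4) \<le> t" using away t unfolding m_def by linarith
    then have "\<bar>msq_incr M X t (t + h) - \<kappa>\<^sup>2 * h powr (2 * \<gamma>)\<bar> \<le> 3 * \<epsilon> * \<kappa>\<^sup>2 * h powr (2 * \<gamma>)"
      using h t fine unfolding m_def by (intro C2) auto
    also have "h powr (2 * \<gamma>) \<le> (2 * m) powr (2 * \<gamma>)"
      using h gamma_pos by (intro powr_mono2) auto
    also have "\<dots> \<le> 2\<^sup>2 * m powr (2 * \<gamma>)"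
      using m gamma_pos gamma_less_1 by (intro powr_scale_le) auto
    finally show ?thesis using \<epsilon> by (simp add: mult_left_mono)
  qed
  have "\<bar>msq_incr M X (tp n (k - 1)) (tp n k) - \<kappa>\<^sup>2 * a powr (2 * \<gamma>)\<bar> \<le> 12 * \<epsilon> * \<kappa>\<^sup>2 * m powr (2 * \<gamma>)"
    using incr_close[of a "tp n (k - 1)"] pos ab tp_k end_le_T by auto
  moreover have "\<bar>msq_incr M X (tp n k) (tp n (k + 1)) - \<kappa>\<^sup>2 * b powr (2 * \<gamma>)\<bar> \<le> 12 * \<epsilon> * \<kappa>\<^sup>2 * m powr (2 * \<gamma>)"
    using incr_close[of b "tp n k"] pos ab tp_k end_le_T by auto
  moreover have "\<bar>msq_incr M X (tp n (k - 1)) (tp n (k + 1)) - \<kappa>\<^sup>2 * (a + b) powr (2 * \<gamma>)\<bar> \<le> 12 * \<epsilon> * \<kappa>\<^sup>2 * m powr (2 * \<gamma>)"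
    using incr_close[of "a + b" "tp n (k - 1)"] pos ab tp_k end_le_T by (auto simp: add.assoc)
  ultimately have "\<bar>exact_summand n k - model_summand n k\<bar>
      \<le> 5 * c ^ 4 * m powr (1 - 2 * \<gamma>) * (12 * \<epsilon> * \<kappa>\<^sup>2 * m powr (2 * \<gamma>))"
    unfolding exact_summand_def model_summand_def a_def[symmetric] b_def[symmetric] v2_summand_diff
    by (rule abs_v2_summand_le[OF gamma_pos gamma_less_1 c_ge_1 m ab])
  also have "\<dots> = 60 * c ^ 4 * \<kappa>\<^sup>2 * \<epsilon> * (m powr (1 - 2 * \<gamma>) * m powr (2 * \<gamma>))"
    by (simp add: algebra_simps)
  also have "m powr (1 - 2 * \<gamma>) * m powr (2 * \<gamma>) = m" using m by (simp add: powr_add[symmetric])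
  finally show ?thesis by (simp add: m_def)
qed

lemma summand_error_near_0_le:
  assumes C1: "\<And>x. 0 < x \<Longrightarrow> x < b1 \<Longrightarrow> msq_incr M X 0 x \<le> C\<^sup>2 * x powr (2 * \<gamma>)"
    and coarse: "mmax n \<le> 1" and small: "3 * (2 * mmax n powr (3/4)) < b1"
    and k: "1 \<le> k" "k \<le> N n - 1"
    and near: "tp n (k - 1) < 2 * mmax n powr (3/4)"
  shows "\<bar>exact_summand n k - model_summand n k\<bar>
    \<le> 5 * c ^ 4 * mmax n powr (1 - 2 * \<gamma>) * ((36 * C\<^sup>2 + 4 * \<kappa>\<^sup>2) * (2 * mmax n powr (3/4)) powr (2 * \<gamma>))"
proof -
  define m u a b where "m = mmax n" and "u = 2 * mmax n powr (3/4)"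
    and "a = Dt tp n k" and "b = Dt tp n (k + 1)"
  have m: "0 < m" and mu: "m \<le> u"
    using mesh_max_pos[of n] mesh_max_le_powr[OF coarse] unfolding m_def u_def by auto
  have u: "0 < u" using m mu by simp
  have ab: "m / c \<le> a" "a \<le> m" "m / c \<le> b" "b \<le> m"
    using Dt_between[of k n] Dt_between[of "k + 1" n] k unfolding m_def a_def b_def by auto
  have pos: "0 < a" "0 < b" using Dt_pos k unfolding a_def b_def by auto
  have tp_k: "tp n k = tp n (k - 1) + a" "tp n (k + 1) = tp n k + b"
    unfolding a_def b_def Dt_def using k by auto
  have points: "tp n j \<in> {0..min (3 * u) T}" if "j \<in> {k - 1, k, k + 1}" for j
    using that tp_in_interval[of j n] k tp_k near ab mu pos unfolding u_def by auto
  have msq_bound: "\<bar>msq_incr M X s t\<bar> \<le> 36 * C\<^sup>2 * u powr (2 * \<gamma>)"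
    if "s \<in> {0..min (3 * u) T}" "t \<in> {0..min (3 * u) T}" for s t
  proof -
    have "3 * u < b1" using small by (simp add: u_def)
    then have "\<bar>msq_incr M X s t\<bar> \<le> 4 * C\<^sup>2 * (3 * u) powr (2 * \<gamma>)"
      using msq_incr_nonneg[of M X s t] msq_incr_le_near_0[OF C1 _ _ that] gamma_pos by simp
    also have "\<dots> \<le> 4 * C\<^sup>2 * (3\<^sup>2 * u powr (2 * \<gamma>))"
      using u gamma_pos gamma_less_1 by (intro mult_left_mono powr_scale_le) auto
    finally show ?thesis by simp
  qed
  have model_bound: "\<bar>\<kappa>\<^sup>2 * x powr (2 * \<gamma>)\<bar> \<le> 4 * \<kappa>\<^sup>2 * u powr (2 * \<gamma>)"
    if "0 < x" "x \<le> 2 * u" for x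
    using model_variance_le[OF u that gamma_pos gamma_less_1] .
  have "\<bar>exact_summand n k\<bar> \<le> 5 * c ^ 4 * m powr (1 - 2 * \<gamma>) * (36 * C\<^sup>2 * u powr (2 * \<gamma>))"
    unfolding exact_summand_def a_def[symmetric] b_def[symmetric]
    by (intro abs_v2_summand_le[OF gamma_pos gamma_less_1 c_ge_1 m ab] msq_bound points) auto
  moreover have "\<bar>model_summand n k\<bar> \<le> 5 * c ^ 4 * m powr (1 - 2 * \<gamma>) * (4 * \<kappa>\<^sup>2 * u powr (2 * \<gamma>))"
    unfolding model_summand_def a_def[symmetric] b_def[symmetric]
    by (intro abs_v2_summand_le[OF gamma_pos gamma_less_1 c_ge_1 m ab] model_bound) (use ab pos mu in auto)
  moreover have "5 * c ^ 4 * m powr (1 - 2 * \<gamma>) * ((36 * C\<^sup>2 + 4 * \<kappa>\<^sup>2) * u powr (2 * \<gamma>))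
      = 5 * c ^ 4 * m powr (1 - 2 * \<gamma>) * (36 * C\<^sup>2 * u powr (2 * \<gamma>))
        + 5 * c ^ 4 * m powr (1 - 2 * \<gamma>) * (4 * \<kappa>\<^sup>2 * u powr (2 * \<gamma>))"
    by (simp add: algebra_simps)
  ultimately have "\<bar>exact_summand n k - model_summand n k\<bar>
      \<le> 5 * c ^ 4 * m powr (1 - 2 * \<gamma>) * ((36 * C\<^sup>2 + 4 * \<kappa>\<^sup>2) * u powr (2 * \<gamma>))"
    by linarith
  then show ?thesis unfolding m_def u_def .
qed

lemma summand_error_sum_le:
  assumes \<epsilon>: "0 < \<epsilon>"
    and C2: "\<And>t h. 0 < h \<Longrightarrow> h < d \<Longrightarrow> h powr (3/4) \<le> t \<Longrightarrow> t + h \<le> T \<Longrightarrow>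
        \<bar>msq_incr M X t (t + h) - \<kappa>\<^sup>2 * h powr (2 * \<gamma>)\<bar> \<le> 3 * \<epsilon> * \<kappa>\<^sup>2 * h powr (2 * \<gamma>)"
    and C1: "\<And>x. 0 < x \<Longrightarrow> x < b1 \<Longrightarrow> msq_incr M X 0 x \<le> C\<^sup>2 * x powr (2 * \<gamma>)"
    and coarse: "mmax n \<le> 1" and fine: "2 * mmax n < d" and small: "3 * (2 * mmax n powr (3/4)) < b1"
  shows "\<bar>\<Sum>k = 1..N n - 1. exact_summand n k - model_summand n k\<bar> \<le> 60 * c ^ 5 * \<kappa>\<^sup>2 * T * \<epsilon> +
     (c + 1) * (5 * c ^ 4 * (36 * C\<^sup>2 + 4 * \<kappa>\<^sup>2)) * ((2 * mmax n powr (3/4) / mmax n) *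
       mmax n powr (1 - 2 * \<gamma>) * (2 * mmax n powr (3/4)) powr (2 * \<gamma>))"
proof -
  define u where "u = 2 * mmax n powr (3/4)"
  define near where "near = {1..N n - 1} \<inter> {k. tp n (k - 1) < u}"
  define bulk_err where "bulk_err = 60 * c ^ 4 * \<kappa>\<^sup>2 * \<epsilon> * mmax n"
  define near_err where "near_err = 5 * c ^ 4 * mmax n powr (1 - 2 * \<gamma>) * ((36 * C\<^sup>2 + 4 * \<kappa>\<^sup>2) * u powr (2 * \<gamma>))"
  have errs: "0 \<le> bulk_err" "0 \<le> near_err"
    unfolding bulk_err_def near_err_def using mesh_max_pos[of n] \<epsilon> by simp_all
  have "\<bar>exact_summand n k - model_summand n k\<bar> \<le> bulk_err + near_err * of_bool (k \<in> near)"
    if k: "k \<in> {1..N n - 1}" for k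
  proof (cases "tp n (k - 1) < u")
    case True
    then show ?thesis using summand_error_near_0_le[OF C1 coarse small, of k] k errs
      unfolding near_err_def near_def u_def by auto
  next
    case False
    then show ?thesis using summand_error_bulk_le[OF \<epsilon> C2 fine, of k] k
      unfolding bulk_err_def near_def u_def by auto
  qed
  then have "\<bar>\<Sum>k = 1..N n - 1. exact_summand n k - model_summand n k\<bar>
      \<le> (\<Sum>k = 1..N n - 1. bulk_err + near_err * of_bool (k \<in> near))"
    by (intro order_trans[OF sum_abs] sum_mono)
  also have "\<dots> = real (N n - 1) * bulk_err + near_err * real (card near)"
    by (simp add: sum.distrib sum_distrib_left[symmetric] near_def Int_def)
  finally have split: "\<bar>\<Sum>k = 1..N n - 1. exact_summand n k - model_summand n k\<bar>
      \<le> real (N n - 1) * bulk_err + near_err * real (card near)" .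
  have "real (N n - 1) * bulk_err \<le> real (N n) * bulk_err" using errs by (intro mult_right_mono) auto
  also have "\<dots> = 60 * c ^ 4 * \<kappa>\<^sup>2 * \<epsilon> * (real (N n) * mmax n)" by (simp add: bulk_err_def)
  also have "\<dots> \<le> 60 * c ^ 4 * \<kappa>\<^sup>2 * \<epsilon> * (c * T)"
    using N_mesh_max_le \<epsilon> c_ge_1 by (intro mult_left_mono) auto
  also have "\<dots> = 60 * c ^ 5 * \<kappa>\<^sup>2 * T * \<epsilon>"
    by (simp add: numeral_eq_Suc algebra_simps)
  finally have bulk: "real (N n - 1) * bulk_err \<le> 60 * c ^ 5 * \<kappa>\<^sup>2 * T * \<epsilon>" .
  have "near_err * real (card near) \<le> near_err * ((c + 1) * (u / mmax n))"
    using card_cells_near_0_le[OF coarse] errs unfolding near_def u_def by (intro mult_left_mono) auto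
  also have "\<dots> = (c + 1) * (5 * c ^ 4 * (36 * C\<^sup>2 + 4 * \<kappa>\<^sup>2)) *
      ((u / mmax n) * mmax n powr (1 - 2 * \<gamma>) * u powr (2 * \<gamma>))"
    unfolding near_err_def by (simp only: ac_simps)
  finally have "near_err * real (card near) \<le> \<dots>" .
  with split bulk show ?thesis unfolding u_def by linarith
qed

lemma summand_error_tendsto_0:
  assumes C1: "cond_C1 M X \<gamma>" and C2: "cond_C2 M X T \<gamma> \<kappa>"
  shows "(\<lambda>n. \<Sum>k = 1..N n - 1. exact_summand n k - model_summand n k) \<longlonglongrightarrow> 0"
proof (rule tendstoI)
  fix e :: real assume e: "e > 0"
  define A where "A = 60 * c ^ 5 * \<kappa>\<^sup>2 * T"
  have A: "A > 0" unfolding A_def using c_ge_1 kappa_pos T_pos by simp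
  define \<epsilon> where "\<epsilon> = min 1 (e / (2 * A))"
  have \<epsilon>: "0 < \<epsilon>" "\<epsilon> \<le> 1" "A * \<epsilon> \<le> e / 2"
    using e A by (auto simp: \<epsilon>_def min_def field_simps)
  obtain d where d: "d > 0" and C2': "\<And>t h. 0 < h \<Longrightarrow> h < d \<Longrightarrow> h powr (3/4) \<le> t \<Longrightarrow> t + h \<le> T \<Longrightarrow>
      \<bar>msq_incr M X t (t + h) - \<kappa>\<^sup>2 * h powr (2 * \<gamma>)\<bar> \<le> 3 * \<epsilon> * \<kappa>\<^sup>2 * h powr (2 * \<gamma>)"
    using cond_C2_msq_incr[OF C2 kappa_pos \<epsilon>(1,2)] by blast
  obtain b1 C where b1: "b1 > 0" and C1': "\<And>x. 0 < x \<Longrightarrow> x < b1 \<Longrightarrow> msq_incr M X 0 x \<le> C\<^sup>2 * x powr (2 * \<gamma>)"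
    using cond_C1_msq_incr[OF C1] by blast
  define K where "K = (c + 1) * (5 * c ^ 4 * (36 * C\<^sup>2 + 4 * \<kappa>\<^sup>2)) * (2 * 2 powr (2 * \<gamma>))"
  have nonneg: "\<forall>\<^sub>F n in sequentially. 0 \<le> mmax n" using mesh_max_pos by (simp add: less_imp_le)
  have "(\<lambda>n. 2 * mmax n powr (3/4)) \<longlonglongrightarrow> 0"
    using tendsto_mult_right_zero[OF tendsto_zero_powrI[OF mesh_max_tendsto_0 tendsto_const nonneg], of "3/4" 2]
    by simp
  moreover have "(\<lambda>n. K * mmax n powr (3/4 - \<gamma>/2)) \<longlonglongrightarrow> 0"
    using tendsto_mult_right_zero[OF tendsto_zero_powrI[OF mesh_max_tendsto_0 tendsto_const nonneg], of "3/4 - \<gamma>/2" K]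
      gamma_less_1 by simp
  ultimately have "\<forall>\<^sub>F n in sequentially. mmax n < 1 \<and> mmax n < d / 2 \<and>
      2 * mmax n powr (3/4) < b1 / 3 \<and> K * mmax n powr (3/4 - \<gamma>/2) < e / 2"
    using order_tendstoD(2)[OF mesh_max_tendsto_0, of 1] order_tendstoD(2)[OF mesh_max_tendsto_0, of "d / 2"]
      d b1 e by (auto intro!: eventually_conj order_tendstoD(2))
  then show "\<forall>\<^sub>F n in sequentially. dist (\<Sum>k = 1..N n - 1. exact_summand n k - model_summand n k) 0 < e"
  proof eventually_elim
    case (elim n)
    have "\<bar>\<Sum>k = 1..N n - 1. exact_summand n k - model_summand n k\<bar> \<le> 60 * c ^ 5 * \<kappa>\<^sup>2 * T * \<epsilon> +
        (c + 1) * (5 * c ^ 4 * (36 * C\<^sup>2 + 4 * \<kappa>\<^sup>2)) * ((2 * mmax n powr (3/4) / mmax n) *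
          mmax n powr (1 - 2 * \<gamma>) * (2 * mmax n powr (3/4)) powr (2 * \<gamma>))"
      using elim by (intro summand_error_sum_le[OF \<epsilon>(1) C2' C1']) auto
    also have "\<dots> = A * \<epsilon> + K * mmax n powr (3/4 - \<gamma>/2)"
      unfolding near_zero_rate_eq[OF mesh_max_pos] A_def K_def by (simp only: mult_ac)
    finally show ?case using \<epsilon> elim by simp
  qed
qed

lemma expectation_V2_tendsto:
  assumes "cond_C1 M X \<gamma>" "cond_C2 M X T \<gamma> \<kappa>"
    and "(\<lambda>n. \<Sum>k = 1..N n - 1. model_summand n k) \<longlonglongrightarrow> L"
  shows "(\<lambda>n. \<integral>\<omega>. V2 \<gamma> N tp (\<lambda>s. X s \<omega>) n \<partial>M) \<longlonglongrightarrow> L"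
proof -
  have "(\<integral>\<omega>. V2 \<gamma> N tp (\<lambda>s. X s \<omega>) n \<partial>M)
      = (\<Sum>k = 1..N n - 1. model_summand n k) + (\<Sum>k = 1..N n - 1. exact_summand n k - model_summand n k)"
    for n
  proof -
    have "(\<integral>\<omega>. V2 \<gamma> N tp (\<lambda>s. X s \<omega>) n \<partial>M) = (\<Sum>k = 1..N n - 1. exact_summand n k)"
      unfolding exact_summand_def by (rule expectation_V2[OF tp_in_interval])
    then show ?thesis by (simp add: sum_subtractf)
  qed
  then show ?thesis
    using tendsto_add[OF assms(3) summand_error_tendsto_0[OF assms(1,2)]] by simp
qed

lemma sum_model_summand:
  "(\<Sum>k = 1..N n - 1. model_summand n k)
    = 2 * \<kappa>\<^sup>2 * (\<Sum>k = 1..N n - 1. Dt tp n (k + 1) * gfun \<gamma> (Dt tp n k / Dt tp n (k + 1)))"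
  by (simp add: sum_distrib_left model_summand_eq mult.assoc)

lemma gfun_ratio_uniformly_close:
  assumes ratios: "has_asymptotic_ratios N tp ell"
    and inv: "invariant_on (gfun \<gamma>) (ratio_range ell)" and l: "l \<in> ratio_range ell"
    and e: "e > 0"
  shows "\<forall>\<^sub>F n in sequentially. \<forall>k\<in>{1..N n - 1}. \<bar>gfun \<gamma> (Dt tp n k / Dt tp n (k + 1)) - gfun \<gamma> l\<bar> \<le> e"
proof -
  define K where "K = {1 / (2 * c)..2 * c}"
  have "uniformly_continuous_on K (gfun \<gamma>)"
    using c_ge_1 unfolding K_def by (intro compact_uniformly_continuous gfun_continuous_on) auto
  then obtain d where d: "d > 0"
    and unif: "\<And>x y. x \<in> K \<Longrightarrow> y \<in> K \<Longrightarrow> dist y x < d \<Longrightarrow> dist (gfun \<gamma> y) (gfun \<gamma> x) < e"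
    using e unfolding uniformly_continuous_on_def by metis
  define d' where "d' = min d (1 / (2 * c))"
  have d': "d' > 0" "d' \<le> d" "d' \<le> 1 / (2 * c)" using d c_ge_1 by (auto simp: d'_def)
  have "\<forall>\<^sub>F n in sequentially. \<forall>k. 2 \<le> k \<and> k \<le> N n \<longrightarrow> \<bar>Dt tp n (k - 1) / Dt tp n k - ell k\<bar> < d'"
    using ratios d' unfolding has_asymptotic_ratios_def by blast
  then show ?thesis
  proof eventually_elim
    case (elim n)
    show ?case
    proof
      fix k assume k: "k \<in> {1..N n - 1}"
      define \<rho> where "\<rho> = Dt tp n k / Dt tp n (k + 1)"
      have \<rho>: "1 / c \<le> \<rho>" "\<rho> \<le> c" using Dt_ratio_between[of k n] k by (auto simp: \<rho>_def)
      have close: "\<bar>\<rho> - ell (k + 1)\<bar> < d'" using elim[rule_format, of "k + 1"] k by (auto simp: \<rho>_def)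
      have "1 / (2 * c) \<le> 1 / c" "1 / c \<le> 1" "1 / c - 1 / (2 * c) = 1 / (2 * c)"
        using c_ge_1 by (simp_all add: field_simps)
      moreover have "\<rho> - d' < ell (k + 1)" "ell (k + 1) < \<rho> + d'" using close by auto
      ultimately have "\<rho> \<in> K" "ell (k + 1) \<in> K"
        using \<rho> d' c_ge_1 unfolding K_def atLeastAtMost_iff by linarith+
      moreover have "gfun \<gamma> (ell (k + 1)) = gfun \<gamma> l"
        using inv l k unfolding invariant_on_def ratio_range_def by auto
      ultimately show "\<bar>gfun \<gamma> (Dt tp n k / Dt tp n (k + 1)) - gfun \<gamma> l\<bar> \<le> e"
        using unif[of "ell (k + 1)" \<rho>] close d' by (simp add: dist_real_def \<rho>_def)
    qed
  qed
qed

lemma model_sum_tendsto_invariant: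
  assumes "has_asymptotic_ratios N tp ell"
    and "invariant_on (gfun \<gamma>) (ratio_range ell)" and "l \<in> ratio_range ell"
  shows "(\<lambda>n. \<Sum>k = 1..N n - 1. model_summand n k) \<longlonglongrightarrow> 2 * \<kappa>\<^sup>2 * gfun \<gamma> l * T"
proof -
  have "(\<lambda>n. \<Sum>k = 1..N n - 1. Dt tp n (k + 1) * gfun \<gamma> (Dt tp n k / Dt tp n (k + 1))) \<longlonglongrightarrow> gfun \<gamma> l * T"
    using gfun_ratio_uniformly_close[OF assms] by (rule weighted_sum_tendsto)
  then have "(\<lambda>n. 2 * \<kappa>\<^sup>2 * (\<Sum>k = 1..N n - 1. Dt tp n (k + 1) * gfun \<gamma> (Dt tp n k / Dt tp n (k + 1))))
      \<longlonglongrightarrow> 2 * \<kappa>\<^sup>2 * (gfun \<gamma> l * T)"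
    by (rule tendsto_mult_left)
  then show ?thesis unfolding sum_model_summand by (simp add: mult.assoc)
qed

lemma gfun_ratio_step_bounded: obtains G where "\<And>n t. \<bar>gfun \<gamma> (ratio_step n t)\<bar> \<le> G"
proof -
  have "compact (gfun \<gamma> ` {1 / c..c})"
    using c_ge_1 by (intro compact_continuous_image gfun_continuous_on) auto
  then obtain G where G: "\<And>y. y \<in> gfun \<gamma> ` {1 / c..c} \<Longrightarrow> \<bar>y\<bar> \<le> G"
    using compact_imp_bounded bounded_iff real_norm_def by metis
  show ?thesis
  proof (rule that)
    fix n t
    show "\<bar>gfun \<gamma> (ratio_step n t)\<bar> \<le> G"
      using ratio_step_between[of n t] G[of "gfun \<gamma> 1"] G[of "gfun \<gamma> (ratio_step n t)"] c_ge_1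
      by (auto simp: field_simps)
  qed
qed

lemma gfun_ratio_step_tendsto:
  assumes ratios: "has_asymptotic_ratios N tp ell"
    and uniform: "\<forall>\<epsilon>>0. \<forall>\<^sub>F n in sequentially. \<forall>t\<in>{tp n 1..<T}. \<bar>ell_step N tp ell n t - ellf t\<bar> \<le> \<epsilon>"
    and t: "0 < t" "t < T"
  shows "(\<lambda>n. gfun \<gamma> (ratio_step n t)) \<longlonglongrightarrow> gfun \<gamma> (ellf t)"
proof -
  have lim: "(\<lambda>n. ratio_step n t) \<longlonglongrightarrow> ellf t"
    using ratio_step_tendsto[OF _ ratios t] uniform by blast
  have "\<forall>\<^sub>F n in sequentially. 1 / c \<le> ratio_step n t"
    using eventually_tp_1_le[OF t(1)]
  proof eventually_elim
    case (elim n)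
    then obtain j where "1 \<le> j" "j \<le> N n - 1" "tp n j \<le> t" "t < tp n (j + 1)"
      using cell_exists t(2) by blast
    then show ?case using ratio_step_in_cell Dt_ratio_between by auto
  qed
  then have "0 < ellf t"
    using tendsto_lowerbound[OF lim] c_ge_1
    by (meson less_le_trans divide_pos_pos trivial_limit_sequentially zero_less_one)
  then show ?thesis using isCont_tendsto_compose[OF gfun_isCont lim] by simp
qed

lemma model_sum_tendsto_integral:
  assumes ratios: "has_asymptotic_ratios N tp ell"
    and uniform: "\<forall>\<epsilon>>0. \<forall>\<^sub>F n in sequentially. \<forall>t\<in>{tp n 1..<T}. \<bar>ell_step N tp ell n t - ellf t\<bar> \<le> \<epsilon>"
  shows "(\<lambda>n. \<Sum>k = 1..N n - 1. model_summand n k) \<longlonglongrightarrow> 2 * \<kappa>\<^sup>2 * integral {0..T} (\<lambda>t. gfun \<gamma> (ellf t))"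
proof -
  obtain G where G: "\<And>n t. \<bar>gfun \<gamma> (ratio_step n t)\<bar> \<le> G"
    using gfun_ratio_step_bounded by blast
  text \<open>The endpoints are redefined so that the sequence converges everywhere on {0..T}.\<close>
  define f where "f n t = (if t \<in> {0<..<T} then gfun \<gamma> (ratio_step n t) else gfun \<gamma> (ellf t))" for n t
  define S where "S n = (\<Sum>k = 1..N n - 1. gfun \<gamma> (Dt tp n k / Dt tp n (k + 1)) * Dt tp n (k + 1))" for n
  have integral: "(f n has_integral S n) {0..T}" for n
    unfolding S_def
    by (rule has_integral_spike_finite[where S = "{0, T}", OF _ _ has_integral_comp_ratio_step])
      (auto simp: f_def)
  have conv: "(\<lambda>n. f n t) \<longlonglongrightarrow> gfun \<gamma> (ellf t)" if "t \<in> {0..T}" for t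
    using gfun_ratio_step_tendsto[OF ratios uniform, of t] that
    by (cases "t \<in> {0<..<T}") (auto simp: f_def)
  have bound: "norm (f n t) \<le> G + \<bar>gfun \<gamma> (ellf 0)\<bar> + \<bar>gfun \<gamma> (ellf T)\<bar>" if "t \<in> {0..T}" for n t
    using G[of n t] that by (auto simp: f_def)
  have "(\<lambda>n. integral {0..T} (f n)) \<longlonglongrightarrow> integral {0..T} (\<lambda>t. gfun \<gamma> (ellf t))"
    by (rule dominated_convergence(2)[OF has_integral_integrable[OF integral] _ bound conv]) auto
  then have "S \<longlonglongrightarrow> integral {0..T} (\<lambda>t. gfun \<gamma> (ellf t))"
    using integral_unique[OF integral] by simp
  then have "(\<lambda>n. 2 * \<kappa>\<^sup>2 * S n) \<longlonglongrightarrow> 2 * \<kappa>\<^sup>2 * integral {0..T} (\<lambda>t. gfun \<gamma> (ellf t))"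
    by (rule tendsto_mult_left)
  then show ?thesis unfolding sum_model_summand S_def by (simp add: mult.commute)
qed

end

text \<open>Only second moments of increments enter E V2.\<close>
theorem proposition1:
  fixes M :: "'a measure" and X :: "real \<Rightarrow> 'a \<Rightarrow> real"
    and T \<gamma> \<kappa> :: real and N :: "nat \<Rightarrow> nat" and tp :: "nat \<Rightarrow> nat \<Rightarrow> real"
    and ell :: "nat \<Rightarrow> real"
  assumes "T > 0"
    and "prob_space M"
    and "\<And>t. t \<in> {0..T} \<Longrightarrow> X t \<in> borel_measurable M"
    and "\<And>t. t \<in> {0..T} \<Longrightarrow> integrable M (\<lambda>\<omega>. (X t \<omega>)\<^sup>2)"
    and "\<And>t. t \<in> {0..T} \<Longrightarrow> (\<integral>\<omega>. X t \<omega> \<partial>M) = 0"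
    and "0 < \<gamma>" "\<gamma> < 1" "\<kappa> > 0"
    and "cond_C1 M X \<gamma>"
    and "cond_C2 M X T \<gamma> \<kappa>"
    and "partition_seq T N tp"
    and "has_asymptotic_ratios N tp ell"
  shows "(invariant_on (gfun \<gamma>) (ratio_range ell) \<longrightarrow>
            (\<forall>l\<in>ratio_range ell.
               (\<lambda>n. \<integral>\<omega>. V2 \<gamma> N tp (\<lambda>s. X s \<omega>) n \<partial>M)
                 \<longlonglongrightarrow> 2 * \<kappa>\<^sup>2 * gfun \<gamma> l * T))
       \<and> (\<forall>ellf :: real \<Rightarrow> real.
            (\<forall>\<epsilon>>0. \<forall>\<^sub>F n in sequentially. \<forall>t\<in>{tp n 1..<T}.
                \<bar>ell_step N tp ell n t - ellf t\<bar> \<le> \<epsilon>) \<longrightarrow>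
            (\<lambda>n. \<integral>\<omega>. V2 \<gamma> N tp (\<lambda>s. X s \<omega>) n \<partial>M)
              \<longlonglongrightarrow> 2 * \<kappa>\<^sup>2 * integral {0..T} (\<lambda>t. gfun \<gamma> (ellf t)))"
proof -
  obtain c where "c \<ge> 1" "\<And>n. mesh_max N tp n \<le> c * mesh_min N tp n"
    using assms(12) unfolding has_asymptotic_ratios_def by blast
  then interpret v2_setting T N tp c M X \<gamma> \<kappa>
    using assms by unfold_locales auto
  note E_V2_tendsto = expectation_V2_tendsto[OF assms(9,10)]
  show ?thesis
    using E_V2_tendsto[OF model_sum_tendsto_invariant[OF assms(12)]]
      E_V2_tendsto[OF model_sum_tendsto_integral[OF assms(12)]]
    by blast
qed

end
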